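(* Let $S\subseteq R$ be a set of long roots such that $\alpha+\beta\notin R$ for all $\alpha,\beta\in S$ and $(\gamma+R)\cap(S+S)=\emptyset$ for all $\gamma\in R\setminus S$. For $\alpha\in S$ set $\alpha^\perp=\{\gamma\in S:(\alpha,\gamma)=0\}$. Then $\#\alpha^\perp=\#\beta^\perp$ for all $\alpha,\beta\in S$.
   Context: $R$ is the root system of a complex simple Lie algebra with the form $(\cdot,\cdot)$ induced by the Killing form. $S+S=\{\alpha+\beta:\alpha,\beta\in S\}$, $\gamma+R=\{\gamma+\delta:\delta\in R\}$. *)

theory Defs
  imports "HOL-Analysis.Analysis"
begin

text \<open>The form induced by the Killing form on the real span of the roots of a complex
  simple Lie algebra is a positive definite inner product; for an irreducible root
  system it is unique up to a positive scalar, so we use the ambient inner product.\<close>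

definition root_reflection :: "'a::euclidean_space \<Rightarrow> 'a \<Rightarrow> 'a" where
  "root_reflection a x = x - (2 * (x \<bullet> a) / (a \<bullet> a)) *\<^sub>R a"

definition root_system :: "'a::euclidean_space set \<Rightarrow> bool" where
  "root_system R \<longleftrightarrow>
     finite R \<and> 0 \<notin> R \<and> span R = UNIV \<and>
     (\<forall>a\<in>R. root_reflection a ` R = R) \<and>
     (\<forall>a\<in>R. \<forall>b\<in>R. 2 * (b \<bullet> a) / (a \<bullet> a) \<in> \<int>) \<and>
     (\<forall>a\<in>R. \<forall>c::real. c *\<^sub>R a \<in> R \<longrightarrow> c = 1 \<or> c = -1)"

text \<open>Root systems of complex simple Lie algebras = nonempty irreducible reduced root systems.\<close>
definition irreducible_root_system :: "'a::euclidean_space set \<Rightarrow> bool" where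
  "irreducible_root_system R \<longleftrightarrow>
     root_system R \<and> R \<noteq> {} \<and>
     \<not> (\<exists>R1 R2. R1 \<noteq> {} \<and> R2 \<noteq> {} \<and> R1 \<union> R2 = R \<and>
            (\<forall>a\<in>R1. \<forall>b\<in>R2. a \<bullet> b = 0))"

definition long_root :: "'a::euclidean_space set \<Rightarrow> 'a \<Rightarrow> bool" where
  "long_root R a \<longleftrightarrow> a \<in> R \<and> (\<forall>b\<in>R. b \<bullet> b \<le> a \<bullet> a)"

definition root_perp :: "'a::euclidean_space set \<Rightarrow> 'a \<Rightarrow> 'a set" where
  "root_perp S a = {g \<in> S. a \<bullet> g = 0}"

end

theory Submission
  imports Defs
begin

(* 1. Elementary facts on root systems: reflections are isometric involutions; for a
      long root a and a root x other than a and -a, 2(x.a) is -(a.a), 0 or a.a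
      (Cauchy-Schwarz plus integrality of Cartan numbers); this yields root strings.
   2. In an irreducible root system any two roots are joined by a path of length at
      most two in the non-orthogonality graph (otherwise R would split orthogonally).
   3. If alpha, beta in S satisfy 2(alpha.beta) = alpha.alpha, the reflection in the root
      alpha - beta maps S into S (by saturation) and alpha to beta, hence injects the
      orthogonal set of alpha into that of beta; by symmetry both sets have the same size.
   4. If alpha, beta in S are orthogonal, step 2 produces a root eta with half pairings
      against both; then alpha + beta - eta is a root, so eta lies in S by saturation,
      and step 3 applies to the pairs (alpha, eta) and (eta, beta).
   The case 2(alpha.beta) = -(alpha.alpha) is excluded since then alpha + beta is a root. *)

lemma root_system_finite: "root_system R \<Longrightarrow> finite R"
  and root_system_nonzero: "root_system R \<Longrightarrow> a \<in> R \<Longrightarrow> a \<noteq> 0"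
  and root_system_reflect: "root_system R \<Longrightarrow> a \<in> R \<Longrightarrow> x \<in> R \<Longrightarrow> root_reflection a x \<in> R"
  and root_system_integral: "root_system R \<Longrightarrow> a \<in> R \<Longrightarrow> x \<in> R \<Longrightarrow> 2 * (x \<bullet> a) / (a \<bullet> a) \<in> \<int>"
  unfolding root_system_def by blast+

lemma root_reflection_inner:
  assumes "a \<noteq> 0"
  shows "root_reflection a x \<bullet> root_reflection a y = x \<bullet> y"
  using assms by (simp add: root_reflection_def inner_diff_left inner_diff_right inner_commute field_simps)

lemma root_reflection_involution:
  assumes "a \<noteq> 0"
  shows "root_reflection a (root_reflection a x) = x"
proof -
  have "root_reflection a x \<bullet> a = - (x \<bullet> a)"
    using assms by (simp add: root_reflection_def inner_diff_left)
  then show ?thesis using assms by (simp add: root_reflection_def algebra_simps)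
qed

lemma root_reflection_orthogonal: "x \<bullet> a = 0 \<Longrightarrow> root_reflection a x = x"
  by (simp add: root_reflection_def)

lemma root_reflection_half:
  assumes "a \<noteq> 0" "2 * (x \<bullet> a) = a \<bullet> a"
  shows "root_reflection a x = x - a"
  using assms by (simp add: root_reflection_def)

lemma root_reflection_minus_half:
  assumes "a \<noteq> 0" "2 * (x \<bullet> a) = - (a \<bullet> a)"
  shows "root_reflection a x = x + a"
  using assms by (simp add: root_reflection_def)

lemma root_system_uminus:
  assumes "root_system R" "a \<in> R"
  shows "- a \<in> R"
proof -
  have "root_reflection a a = - a"
    using root_system_nonzero[OF assms] by (simp add: root_reflection_def scaleR_2)
  then show ?thesis using root_system_reflect[OF assms assms(2)] by simp
qed

lemma root_system_diff:
  assumes "root_system R" "a \<in> R" "x \<in> R" "2 * (x \<bullet> a) = a \<bullet> a"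
  shows "x - a \<in> R"
  using root_system_reflect[OF assms(1-3)] root_reflection_half[OF root_system_nonzero[OF assms(1,2)] assms(4)]
  by simp

lemma root_system_add:
  assumes "root_system R" "a \<in> R" "x \<in> R" "2 * (x \<bullet> a) = - (a \<bullet> a)"
  shows "x + a \<in> R"
  using root_system_reflect[OF assms(1-3)] root_reflection_minus_half[OF root_system_nonzero[OF assms(1,2)] assms(4)]
  by simp

text \<open>A long root is the unique longest root on its line, so by Cauchy-Schwarz
  its pairing with any other root (up to sign) is strictly smaller than its square length.\<close>
lemma long_root_inner_less:
  assumes "long_root R a" "a \<noteq> 0" "x \<in> R" "x \<noteq> a" "x \<noteq> - a"
  shows "\<bar>x \<bullet> a\<bar> < a \<bullet> a"
proof -
  have "x \<bullet> x \<le> a \<bullet> a" using assms(1,3) unfolding long_root_def by blast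
  then have xa: "norm x \<le> norm a" by (simp add: norm_eq_sqrt_inner)
  have cs: "\<bar>x \<bullet> a\<bar> \<le> norm x * norm a" by (rule Cauchy_Schwarz_ineq2)
  also have "\<dots> \<le> norm a * norm a" using xa by (simp add: mult_right_mono)
  also have "\<dots> = a \<bullet> a" by (simp add: dot_square_norm power2_eq_square)
  finally have le: "\<bar>x \<bullet> a\<bar> \<le> a \<bullet> a" .
  have "\<bar>x \<bullet> a\<bar> \<noteq> a \<bullet> a"
  proof
    assume eq: "\<bar>x \<bullet> a\<bar> = a \<bullet> a"
    have "norm a > 0" using assms(2) by simp
    have "norm a * norm a \<le> norm x * norm a"
      using cs eq by (simp add: dot_square_norm power2_eq_square)
    then have "norm x = norm a"
      using xa \<open>norm a > 0\<close> by (meson antisym mult_right_le_imp_le)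
    moreover have "\<bar>x \<bullet> a\<bar> = norm x * norm a"
      using eq calculation by (simp add: dot_square_norm power2_eq_square)
    ultimately have "norm a *\<^sub>R a = norm a *\<^sub>R x \<or> norm a *\<^sub>R a = - norm a *\<^sub>R x"
      using norm_cauchy_schwarz_abs_eq[of x a] by metis
    then have "norm a *\<^sub>R (a - x) = 0 \<or> norm a *\<^sub>R (a + x) = 0"
      by (auto simp: scaleR_diff_right scaleR_add_right)
    then have "a = x \<or> a = - x"
      using \<open>norm a > 0\<close> by (auto simp: eq_neg_iff_add_eq_0)
    then show False using assms(4,5) by auto
  qed
  then show ?thesis using le by simp
qed

text \<open>Since Cartan numbers are integers, the pairing of a long root \<open>a\<close> with a root other
  than \<open>a\<close> and \<open>-a\<close> is \<open>-(a \<bullet> a)/2\<close>, \<open>0\<close> or \<open>(a \<bullet> a)/2\<close>.\<close>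
lemma long_root_pairing:
  assumes "root_system R" "long_root R a" "x \<in> R" "x \<noteq> a" "x \<noteq> - a"
  shows "2 * (x \<bullet> a) = - (a \<bullet> a) \<or> x \<bullet> a = 0 \<or> 2 * (x \<bullet> a) = a \<bullet> a"
proof -
  have aR: "a \<in> R" using assms(2) unfolding long_root_def by blast
  have a0: "a \<bullet> a > 0" using root_system_nonzero[OF assms(1) aR] by simp
  obtain n where n: "2 * (x \<bullet> a) / (a \<bullet> a) = of_int n"
    using root_system_integral[OF assms(1) aR assms(3)] Ints_cases by metis
  have "\<bar>of_int n\<bar> < (2::real)"
    using long_root_inner_less[OF assms(2) root_system_nonzero[OF assms(1) aR] assms(3-5)] a0
    by (simp add: n[symmetric] abs_mult field_simps)
  then have "n \<in> {-1, 0, 1}" by auto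
  then show ?thesis using n a0 by (auto simp: field_simps)
qed

definition within_two :: "'a::euclidean_space set \<Rightarrow> 'a \<Rightarrow> 'a \<Rightarrow> bool" where
  "within_two R a x \<longleftrightarrow> a \<bullet> x \<noteq> 0 \<or> (\<exists>c\<in>R. a \<bullet> c \<noteq> 0 \<and> c \<bullet> x \<noteq> 0)"

text \<open>The set of roots within distance two of \<open>a\<close> is closed under passing to a
  non-orthogonal root: a path \<open>a, c, x, y\<close> is shortened by reflecting \<open>c\<close> in \<open>x\<close>.\<close>
lemma within_two_step:
  assumes rs: "root_system R" and near: "within_two R a x" and x: "x \<in> R"
    and y: "y \<in> R" and xy: "x \<bullet> y \<noteq> 0"
  shows "within_two R a y"
proof (cases "a \<bullet> y = 0 \<and> a \<bullet> x = 0")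
  case False
  then show ?thesis using x xy unfolding within_two_def by blast
next
  case True
  then have ay: "a \<bullet> y = 0" and ax: "a \<bullet> x = 0" by auto
  then obtain c where c: "c \<in> R" "a \<bullet> c \<noteq> 0" "c \<bullet> x \<noteq> 0"
    using near unfolding within_two_def by auto
  show ?thesis
  proof (cases "c \<bullet> y = 0")
    case False
    then show ?thesis using c unfolding within_two_def by blast
  next
    case True
    define k where "k = 2 * (c \<bullet> x) / (x \<bullet> x)"
    define d where "d = root_reflection x c"
    have "k \<noteq> 0" using c(3) root_system_nonzero[OF rs x] unfolding k_def by simp
    have "a \<bullet> d = a \<bullet> c"
      using ax unfolding d_def root_reflection_def by (simp add: inner_diff_right)
    moreover have "d \<bullet> y = - k * (x \<bullet> y)"
      using True unfolding d_def k_def root_reflection_def by (simp add: inner_diff_left)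
    ultimately have "a \<bullet> d \<noteq> 0" "d \<bullet> y \<noteq> 0" using c(2) xy \<open>k \<noteq> 0\<close> by auto
    moreover have "d \<in> R" unfolding d_def using root_system_reflect[OF rs x c(1)] .
    ultimately show ?thesis unfolding within_two_def by blast
  qed
qed

lemma irreducible_within_two:
  assumes irr: "irreducible_root_system R" and a: "a \<in> R" and b: "b \<in> R"
  shows "within_two R a b"
proof (rule ccontr)
  assume far: "\<not> within_two R a b"
  have rs: "root_system R"
    and indecomposable: "\<not> (\<exists>R1 R2. R1 \<noteq> {} \<and> R2 \<noteq> {} \<and> R1 \<union> R2 = R \<and>
                                  (\<forall>x\<in>R1. \<forall>y\<in>R2. x \<bullet> y = 0))"
    using irr unfolding irreducible_root_system_def by blast+
  define R1 where "R1 = {x \<in> R. within_two R a x}"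
  have "a \<in> R1"
    using root_system_nonzero[OF rs a] a unfolding R1_def within_two_def by simp
  moreover have "b \<in> R - R1" using b far unfolding R1_def by simp
  moreover have "\<forall>x\<in>R1. \<forall>y\<in>R - R1. x \<bullet> y = 0"
    using within_two_step[OF rs, of a] unfolding R1_def by auto
  moreover have "R1 \<union> (R - R1) = R" unfolding R1_def by blast
  ultimately have "\<exists>R1 R2. R1 \<noteq> {} \<and> R2 \<noteq> {} \<and> R1 \<union> R2 = R \<and> (\<forall>x\<in>R1. \<forall>y\<in>R2. x \<bullet> y = 0)"
    by (intro exI[where x = R1] exI[where x = "R - R1"]) auto
  with indecomposable show False ..
qed

lemma common_half_root:
  assumes irr: "irreducible_root_system R"
    and la: "long_root R a" and lb: "long_root R b" and ab: "a \<bullet> b = 0"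
  shows "\<exists>\<eta>\<in>R. 2 * (\<eta> \<bullet> a) = a \<bullet> a \<and> 2 * (\<eta> \<bullet> b) = b \<bullet> b"
proof -
  have rs: "root_system R" using irr unfolding irreducible_root_system_def by blast
  have aR: "a \<in> R" and bR: "b \<in> R" using la lb unfolding long_root_def by blast+
  obtain c where c: "c \<in> R" "a \<bullet> c \<noteq> 0" "c \<bullet> b \<noteq> 0"
    using irreducible_within_two[OF irr aR bR] ab unfolding within_two_def by blast
  have "c \<noteq> a" "c \<noteq> - a" "c \<noteq> b" "c \<noteq> - b"
    using c(2,3) ab by (auto simp: inner_commute)
  then have ca: "2 * (c \<bullet> a) = - (a \<bullet> a) \<or> 2 * (c \<bullet> a) = a \<bullet> a"
    and cb: "2 * (c \<bullet> b) = - (b \<bullet> b) \<or> 2 * (c \<bullet> b) = b \<bullet> b"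
    using long_root_pairing[OF rs la c(1)] long_root_pairing[OF rs lb c(1)] c(2,3)
    by (auto simp: inner_commute)
  (* replacing c by -c if necessary, the pairing with a becomes positive *)
  obtain d where d: "d \<in> R" "2 * (d \<bullet> a) = a \<bullet> a"
    "2 * (d \<bullet> b) = - (b \<bullet> b) \<or> 2 * (d \<bullet> b) = b \<bullet> b"
  proof (cases "2 * (c \<bullet> a) = a \<bullet> a")
    case True
    then show ?thesis using that c(1) cb by blast
  next
    case False
    then show ?thesis using that[of "- c"] root_system_uminus[OF rs c(1)] ca cb by auto
  qed
  (* if the pairing with b is negative, d + b is a root with the required pairings *)
  show ?thesis
  proof (cases "2 * (d \<bullet> b) = b \<bullet> b")
    case True
    then show ?thesis using d by blast
  next
    case False
    then have db: "2 * (d \<bullet> b) = - (b \<bullet> b)" using d(3) by blast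
    have "d + b \<in> R" using root_system_add[OF rs bR d(1) db] .
    moreover have "2 * ((d + b) \<bullet> a) = a \<bullet> a"
      using d(2) ab unfolding inner_add_left by (simp add: inner_commute)
    moreover have "2 * ((d + b) \<bullet> b) = b \<bullet> b"
      using db unfolding inner_add_left by (simp add: distrib_left)
    ultimately show ?thesis by blast
  qed
qed

locale saturated_long_set =
  fixes R S :: "'a::euclidean_space set"
  assumes root_system: "root_system R"
    and subset: "S \<subseteq> R"
    and long: "\<forall>a\<in>S. long_root R a"
    and sum_not_root: "\<forall>a\<in>S. \<forall>b\<in>S. a + b \<notin> R"
    and saturated: "\<forall>\<gamma>\<in>R - S. ((\<lambda>\<delta>. \<gamma> + \<delta>) ` R) \<inter> {a + b | a b. a \<in> S \<and> b \<in> S} = {}"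
begin

lemma mem_S_if_completes_sum:
  assumes "\<gamma> \<in> R" "\<delta> \<in> R" "a \<in> S" "b \<in> S" "\<gamma> + \<delta> = a + b"
  shows "\<gamma> \<in> S"
proof (rule ccontr)
  assume "\<gamma> \<notin> S"
  then have empty: "((\<lambda>\<delta>. \<gamma> + \<delta>) ` R) \<inter> {a + b | a b. a \<in> S \<and> b \<in> S} = {}"
    using saturated assms(1) by simp
  have "\<gamma> + \<delta> \<in> (\<lambda>\<delta>. \<gamma> + \<delta>) ` R" using assms(2) by (rule imageI)
  moreover have "\<gamma> + \<delta> \<in> {a + b | a b. a \<in> S \<and> b \<in> S}" using assms(3-5) by auto
  ultimately show False using empty by blast
qed

lemma S_long_root: "a \<in> S \<Longrightarrow> long_root R a"
  using long by blast

lemma S_root: "a \<in> S \<Longrightarrow> a \<in> R"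
  using subset by blast

lemma S_same_length: "a \<in> S \<Longrightarrow> b \<in> S \<Longrightarrow> a \<bullet> a = b \<bullet> b"
  using long unfolding long_root_def by (meson antisym)

lemma half_diff_root:
  assumes "\<alpha> \<in> S" "\<beta> \<in> S" "2 * (\<alpha> \<bullet> \<beta>) = \<alpha> \<bullet> \<alpha>"
  shows "\<alpha> - \<beta> \<in> R" and "(\<alpha> - \<beta>) \<bullet> (\<alpha> - \<beta>) = \<alpha> \<bullet> \<alpha>"
proof -
  have bb: "\<beta> \<bullet> \<beta> = \<alpha> \<bullet> \<alpha>" using S_same_length[OF assms(2,1)] .
  then have "2 * (\<alpha> \<bullet> \<beta>) = \<beta> \<bullet> \<beta>" using assms(3) by simp
  then show "\<alpha> - \<beta> \<in> R"
    by (rule root_system_diff[OF root_system S_root[OF assms(2)] S_root[OF assms(1)]])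
  have "(\<alpha> - \<beta>) \<bullet> (\<alpha> - \<beta>) = \<alpha> \<bullet> \<alpha> - 2 * (\<alpha> \<bullet> \<beta>) + \<beta> \<bullet> \<beta>"
    by (simp add: inner_diff_left inner_diff_right inner_commute)
  then show "(\<alpha> - \<beta>) \<bullet> (\<alpha> - \<beta>) = \<alpha> \<bullet> \<alpha>" using assms(3) bb by simp
qed

text \<open>The reflection in \<open>\<alpha> - \<beta>\<close> maps \<open>S\<close> into itself: it moves an element of \<open>S\<close>
  by \<open>\<plusminus>(\<alpha> - \<beta>)\<close> at most, and the moved root completes a sum of two elements of \<open>S\<close>.\<close>
lemma reflection_maps_S:
  assumes \<alpha>: "\<alpha> \<in> S" and \<beta>: "\<beta> \<in> S" and half: "2 * (\<alpha> \<bullet> \<beta>) = \<alpha> \<bullet> \<alpha>" and \<delta>: "\<delta> \<in> S"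
  shows "root_reflection (\<alpha> - \<beta>) \<delta> \<in> S"
proof -
  define g where "g = \<alpha> - \<beta>"
  have gR: "g \<in> R" and gg: "g \<bullet> g = \<alpha> \<bullet> \<alpha>"
    using half_diff_root[OF \<alpha> \<beta> half] unfolding g_def by blast+
  have g0: "g \<noteq> 0" using root_system_nonzero[OF root_system gR] .
  have reflected: "root_reflection g \<delta> \<in> R"
    using root_system_reflect[OF root_system gR S_root[OF \<delta>]] .
  have "long_root R g"
    using gR gg S_long_root[OF \<alpha>] unfolding long_root_def by simp
  moreover have "\<delta> \<noteq> g"
  proof
    assume "\<delta> = g"
    then have "\<delta> + \<beta> = \<alpha>" unfolding g_def by simp
    then show False using sum_not_root \<delta> \<beta> S_root[OF \<alpha>] by auto
  qed
  moreover have "\<delta> \<noteq> - g"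
  proof
    assume "\<delta> = - g"
    then have "\<delta> + \<alpha> = \<beta>" unfolding g_def by simp
    then show False using sum_not_root \<delta> \<alpha> S_root[OF \<beta>] by auto
  qed
  ultimately consider (minus) "2 * (\<delta> \<bullet> g) = - (g \<bullet> g)" | (orth) "\<delta> \<bullet> g = 0"
    | (plus) "2 * (\<delta> \<bullet> g) = g \<bullet> g"
    using long_root_pairing[OF root_system _ S_root[OF \<delta>]] by blast
  then have "root_reflection g \<delta> \<in> S"
  proof cases
    case minus
    have "root_reflection g \<delta> + \<beta> = \<delta> + \<alpha>"
      using root_reflection_minus_half[OF g0 minus] unfolding g_def by simp
    then show ?thesis
      by (rule mem_S_if_completes_sum[OF reflected S_root[OF \<beta>] \<delta> \<alpha>])
  next
    case orth
    then show ?thesis using root_reflection_orthogonal[OF orth] \<delta> by simp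
  next
    case plus
    have "root_reflection g \<delta> + \<alpha> = \<delta> + \<beta>"
      using root_reflection_half[OF g0 plus] unfolding g_def by simp
    then show ?thesis
      by (rule mem_S_if_completes_sum[OF reflected S_root[OF \<alpha>] \<delta> \<beta>])
  qed
  then show ?thesis unfolding g_def .
qed

text \<open>That reflection sends \<open>\<alpha>\<close> to \<open>\<beta>\<close>, hence injects \<open>root_perp S \<alpha>\<close> into \<open>root_perp S \<beta>\<close>.\<close>
lemma card_perp_le_of_half:
  assumes \<alpha>: "\<alpha> \<in> S" and \<beta>: "\<beta> \<in> S" and half: "2 * (\<alpha> \<bullet> \<beta>) = \<alpha> \<bullet> \<alpha>"
  shows "card (root_perp S \<alpha>) \<le> card (root_perp S \<beta>)"
proof -
  define g where "g = \<alpha> - \<beta>"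
  define s where "s = root_reflection g"
  have g0: "g \<noteq> 0"
    using root_system_nonzero[OF root_system half_diff_root(1)[OF \<alpha> \<beta> half]] unfolding g_def .
  have "2 * (\<alpha> \<bullet> g) = g \<bullet> g"
    using half half_diff_root(2)[OF \<alpha> \<beta> half] unfolding g_def by (simp add: inner_diff_right)
  then have s\<alpha>: "s \<alpha> = \<beta>" unfolding s_def g_def using root_reflection_half[OF g0[unfolded g_def]] by simp
  have "s ` root_perp S \<alpha> \<subseteq> root_perp S \<beta>"
  proof
    fix y assume "y \<in> s ` root_perp S \<alpha>"
    then obtain \<delta> where \<delta>: "\<delta> \<in> S" "\<alpha> \<bullet> \<delta> = 0" and y: "y = s \<delta>"
      unfolding root_perp_def by auto
    have "s \<alpha> \<bullet> s \<delta> = \<alpha> \<bullet> \<delta>" unfolding s_def by (rule root_reflection_inner[OF g0])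
    then have "\<beta> \<bullet> y = 0" using s\<alpha> y \<delta>(2) by simp
    moreover have "y \<in> S"
      using reflection_maps_S[OF \<alpha> \<beta> half \<delta>(1)] y unfolding s_def g_def by simp
    ultimately show "y \<in> root_perp S \<beta>" unfolding root_perp_def by simp
  qed
  moreover have "inj_on s (root_perp S \<alpha>)"
    unfolding s_def by (metis inj_on_inverseI root_reflection_involution[OF g0])
  moreover have "finite (root_perp S \<beta>)"
  proof (rule finite_subset)
    show "root_perp S \<beta> \<subseteq> R" using subset unfolding root_perp_def by blast
  qed (rule root_system_finite[OF root_system])
  ultimately show ?thesis by (metis card_inj_on_le)
qed

text \<open>The relation \<open>2 (\<alpha> \<bullet> \<beta>) = \<alpha> \<bullet> \<alpha>\<close> is symmetric on \<open>S\<close>, giving equality.\<close>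
lemma card_perp_eq_of_half:
  assumes \<alpha>: "\<alpha> \<in> S" and \<beta>: "\<beta> \<in> S" and half: "2 * (\<alpha> \<bullet> \<beta>) = \<alpha> \<bullet> \<alpha>"
  shows "card (root_perp S \<alpha>) = card (root_perp S \<beta>)"
proof -
  have "2 * (\<beta> \<bullet> \<alpha>) = \<beta> \<bullet> \<beta>"
    using half S_same_length[OF \<alpha> \<beta>] by (simp add: inner_commute)
  then show ?thesis
    using card_perp_le_of_half[OF \<alpha> \<beta> half] card_perp_le_of_half[OF \<beta> \<alpha>] by simp
qed

text \<open>A root with half pairings against orthogonal \<open>\<alpha>, \<beta> \<in> S\<close> lies in \<open>S\<close>,
  because \<open>\<alpha> + \<beta> - \<eta>\<close> is a root.\<close>
lemma half_root_in_S:
  assumes \<alpha>: "\<alpha> \<in> S" and \<beta>: "\<beta> \<in> S" and orth: "\<alpha> \<bullet> \<beta> = 0"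
    and \<eta>: "\<eta> \<in> R" "2 * (\<eta> \<bullet> \<alpha>) = \<alpha> \<bullet> \<alpha>" "2 * (\<eta> \<bullet> \<beta>) = \<beta> \<bullet> \<beta>"
  shows "\<eta> \<in> S"
proof -
  have "\<eta> - \<alpha> \<in> R" using root_system_diff[OF root_system S_root[OF \<alpha>] \<eta>(1,2)] .
  moreover have "2 * ((\<eta> - \<alpha>) \<bullet> \<beta>) = \<beta> \<bullet> \<beta>"
    using \<eta>(3) orth by (simp add: inner_diff_left)
  ultimately have "\<eta> - \<alpha> - \<beta> \<in> R" using root_system_diff[OF root_system S_root[OF \<beta>]] by blast
  then have "- (\<eta> - \<alpha> - \<beta>) \<in> R" by (rule root_system_uminus[OF root_system])
  then have "\<alpha> + \<beta> - \<eta> \<in> R" by (simp add: algebra_simps)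
  moreover have "\<eta> + (\<alpha> + \<beta> - \<eta>) = \<alpha> + \<beta>" by simp
  ultimately show ?thesis by (rule mem_S_if_completes_sum[OF \<eta>(1) _ \<alpha> \<beta>])
qed

theorem card_perp_constant:
  assumes irr: "irreducible_root_system R" and \<alpha>: "\<alpha> \<in> S" and \<beta>: "\<beta> \<in> S"
  shows "card (root_perp S \<alpha>) = card (root_perp S \<beta>)"
proof (cases "\<beta> = \<alpha> \<or> \<beta> = - \<alpha>")
  case True
  then show ?thesis unfolding root_perp_def by auto
next
  case False
  then consider (minus) "2 * (\<beta> \<bullet> \<alpha>) = - (\<alpha> \<bullet> \<alpha>)" | (orth) "\<beta> \<bullet> \<alpha> = 0"
    | (plus) "2 * (\<beta> \<bullet> \<alpha>) = \<alpha> \<bullet> \<alpha>"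
    using long_root_pairing[OF root_system S_long_root[OF \<alpha>] S_root[OF \<beta>]] by blast
  then show ?thesis
  proof cases
    case minus
    have "\<beta> + \<alpha> \<in> R" using root_system_add[OF root_system S_root[OF \<alpha>] S_root[OF \<beta>] minus] .
    then show ?thesis using sum_not_root \<alpha> \<beta> by blast
  next
    case plus
    then show ?thesis using card_perp_eq_of_half[OF \<alpha> \<beta>] by (simp add: inner_commute)
  next
    case orth
    then obtain \<eta> where \<eta>: "\<eta> \<in> R" "2 * (\<eta> \<bullet> \<alpha>) = \<alpha> \<bullet> \<alpha>" "2 * (\<eta> \<bullet> \<beta>) = \<beta> \<bullet> \<beta>"
      using common_half_root[OF irr S_long_root[OF \<alpha>] S_long_root[OF \<beta>]] by (auto simp: inner_commute)
    have \<eta>S: "\<eta> \<in> S" using half_root_in_S[OF \<alpha> \<beta> _ \<eta>] orth by (simp add: inner_commute)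
    have "card (root_perp S \<alpha>) = card (root_perp S \<eta>)"
      using card_perp_eq_of_half[OF \<alpha> \<eta>S] \<eta>(2) by (simp add: inner_commute)
    also have "\<dots> = card (root_perp S \<beta>)"
      using card_perp_eq_of_half[OF \<eta>S \<beta>] \<eta>(3) S_same_length[OF \<eta>S \<beta>] by simp
    finally show ?thesis .
  qed
qed

end

theorem mainTheorem17:
  fixes R S :: "'a::euclidean_space set"
  assumes "irreducible_root_system R"
    and "S \<subseteq> R"
    and "\<forall>a\<in>S. long_root R a"
    and "\<forall>a\<in>S. \<forall>b\<in>S. a + b \<notin> R"
    and "\<forall>\<gamma>\<in>R - S. ((\<lambda>\<delta>. \<gamma> + \<delta>) ` R) \<inter> {a + b | a b. a \<in> S \<and> b \<in> S} = {}"
  shows "\<forall>a\<in>S. \<forall>b\<in>S. card (root_perp S a) = card (root_perp S b)"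
proof -
  have "root_system R" using assms(1) unfolding irreducible_root_system_def by blast
  then interpret saturated_long_set R S
    using assms(2-5) by unfold_locales
  show ?thesis using card_perp_constant[OF assms(1)] by blast
qed

end
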